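(* Let $\Gamma$ be a connected countable graph and let $(B_n)_{n\in\mathbb N}$ satisfy $(\dagger)$. Let $u,v\in V(\Gamma)$ be distinct and let $P$ be a path with end-vertices $u$ and $v$ such that no vertex of $V(P)\setminus\{u,v\}$ is critical. Then no maximum matching misses both $u$ and $v$.
   Context: Condition $(\dagger)$ on $(B_n)_{n\in\mathbb N}$: each $B_n\subseteq V(\Gamma)$ is finite, $B_n\subseteq B_{n+1}$, $\bigcup_n B_n=V(\Gamma)$, and the subgraph induced on each $B_n$ is connected. A matching $M$ misses a vertex $x$ if no edge of $M$ contains $x$. The miss sequence of $M$ is $(m_n)_{n\in\mathbb N}$ with $m_n$ the number of vertices of $B_n$ missed by $M$. For matchings $M_1,M_2$ with miss sequences $(a_n),(b_n)$, write $M_1<M_2$ if there is $N$ with $a_n=b_n$ for all $n<N$ and $a_N>b_N$. A maximum matching is a matching $M$ for which no matching $M'$ satisfies $M<M'$. A vertex is critical if no maximum matching misses it. *)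

theory Defs
  imports Main "HOL-Library.Countable_Set"
begin

definition graph :: "'a set \<Rightarrow> ('a \<Rightarrow> 'a \<Rightarrow> bool) \<Rightarrow> bool" where
  "graph V E \<longleftrightarrow> (\<forall>x y. E x y \<longrightarrow> x \<in> V \<and> y \<in> V) \<and> (\<forall>x y. E x y \<longrightarrow> E y x) \<and> (\<forall>x. \<not> E x x)"

definition is_path :: "'a set \<Rightarrow> ('a \<Rightarrow> 'a \<Rightarrow> bool) \<Rightarrow> 'a list \<Rightarrow> bool" where
  "is_path V E p \<longleftrightarrow> p \<noteq> [] \<and> distinct p \<and> set p \<subseteq> V \<and>
     (\<forall>i. Suc i < length p \<longrightarrow> E (p ! i) (p ! Suc i))"

definition connected_graph :: "'a set \<Rightarrow> ('a \<Rightarrow> 'a \<Rightarrow> bool) \<Rightarrow> bool" where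
  "connected_graph V E \<longleftrightarrow> V \<noteq> {} \<and>
     (\<forall>x\<in>V. \<forall>y\<in>V. \<exists>p. is_path V E p \<and> hd p = x \<and> last p = y)"

text \<open>Condition (dagger) on the exhaustion B.\<close>
definition exhaustion :: "'a set \<Rightarrow> ('a \<Rightarrow> 'a \<Rightarrow> bool) \<Rightarrow> (nat \<Rightarrow> 'a set) \<Rightarrow> bool" where
  "exhaustion V E B \<longleftrightarrow>
     (\<forall>n. finite (B n) \<and> B n \<subseteq> V \<and> B n \<subseteq> B (Suc n)) \<and> (\<Union>n. B n) = V \<and>
     (\<forall>n. \<forall>x\<in>B n. \<forall>y\<in>B n. \<exists>p. is_path (B n) E p \<and> hd p = x \<and> last p = y)"

definition matching :: "('a \<Rightarrow> 'a \<Rightarrow> bool) \<Rightarrow> 'a set set \<Rightarrow> bool" where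
  "matching E M \<longleftrightarrow> (\<forall>e\<in>M. \<exists>x y. E x y \<and> e = {x, y}) \<and>
     (\<forall>e\<in>M. \<forall>f\<in>M. e \<noteq> f \<longrightarrow> e \<inter> f = {})"

definition misses :: "'a set set \<Rightarrow> 'a \<Rightarrow> bool" where
  "misses M x \<longleftrightarrow> \<not> (\<exists>e\<in>M. x \<in> e)"

definition miss_seq :: "(nat \<Rightarrow> 'a set) \<Rightarrow> 'a set set \<Rightarrow> nat \<Rightarrow> nat" where
  "miss_seq B M n = card {x \<in> B n. misses M x}"

definition matching_less :: "(nat \<Rightarrow> 'a set) \<Rightarrow> 'a set set \<Rightarrow> 'a set set \<Rightarrow> bool" where
  "matching_less B M1 M2 \<longleftrightarrow> (\<exists>N. (\<forall>n<N. miss_seq B M1 n = miss_seq B M2 n) \<and>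
     miss_seq B M1 N > miss_seq B M2 N)"

definition maximum_matching :: "('a \<Rightarrow> 'a \<Rightarrow> bool) \<Rightarrow> (nat \<Rightarrow> 'a set) \<Rightarrow> 'a set set \<Rightarrow> bool" where
  "maximum_matching E B M \<longleftrightarrow> matching E M \<and> \<not> (\<exists>M'. matching E M' \<and> matching_less B M M')"

definition critical :: "('a \<Rightarrow> 'a \<Rightarrow> bool) \<Rightarrow> (nat \<Rightarrow> 'a set) \<Rightarrow> 'a \<Rightarrow> bool" where
  "critical E B x \<longleftrightarrow> \<not> (\<exists>M. maximum_matching E B M \<and> misses M x)"

end

theory Submission
  imports Defs
begin

text \<open>
Induction along the path. Suppose a maximum matching \<open>M\<close> misses \<open>u\<close> and \<open>v\<close>, and let \<open>x\<close> be the
successor of \<open>u\<close> on the path. As \<open>x\<close> is not critical, some maximum matching \<open>M'\<close> misses \<open>x\<close>; let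
\<open>C\<close> be the vertex set of the \<open>M\<close>-\<open>M'\<close>-alternating walk starting at \<open>x\<close>, which no edge of \<open>M\<close>
or \<open>M'\<close> leaves. Exchanging \<open>M\<close> and \<open>M'\<close> on \<open>C\<close> in either direction gives two matchings whose
miss sequences add up to twice that of \<open>M\<close>; since neither beats \<open>M\<close> lexicographically, both
are maximum. The one that agrees with \<open>M'\<close> on \<open>C\<close> misses \<open>x\<close>. If \<open>u \<notin> C\<close> it also misses \<open>u\<close>, and
adding the edge \<open>ux\<close> would improve it. Otherwise \<open>u\<close> is the far end of the walk, so \<open>v \<notin> C\<close>, and
we have a maximum matching missing both ends of the shorter path from \<open>x\<close> to \<open>v\<close>.
\<close>

definition lex_less :: "(nat \<Rightarrow> 'b::order) \<Rightarrow> (nat \<Rightarrow> 'b) \<Rightarrow> bool" where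
  "lex_less s t \<longleftrightarrow> (\<exists>N. (\<forall>n<N. s n = t n) \<and> s N < t N)"

lemma first_difference:
  fixes s t :: "nat \<Rightarrow> 'b"
  assumes "s \<noteq> t"
  obtains N where "\<forall>n<N. s n = t n" and "s N \<noteq> t N"
proof
  define N where "N = (LEAST n. s n \<noteq> t n)"
  have "\<exists>n. s n \<noteq> t n" using assms by auto
  from LeastI_ex[OF this] show "s N \<noteq> t N" unfolding N_def .
  show "\<forall>n<N. s n = t n" unfolding N_def using not_less_Least by blast
qed

lemma lex_less_linear:
  fixes s t :: "nat \<Rightarrow> 'b::linorder"
  assumes "s \<noteq> t"
  shows "lex_less s t \<or> lex_less t s"
proof -
  obtain N where eq: "\<forall>n<N. s n = t n" and ne: "s N \<noteq> t N"
    using assms by (rule first_difference)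
  from ne consider "s N < t N" | "t N < s N" by (rule linorder_neqE)
  then show ?thesis
    using eq unfolding lex_less_def by cases (metis, metis)
qed

lemma lex_less_if_le:
  fixes s t :: "nat \<Rightarrow> 'b::linorder"
  assumes "\<And>n. s n \<le> t n" and "s \<noteq> t"
  shows "lex_less s t"
proof -
  obtain N where "\<forall>n<N. s n = t n" and "s N \<noteq> t N"
    using assms(2) by (rule first_difference)
  moreover from \<open>s N \<noteq> t N\<close> have "s N < t N" using assms(1) by (simp add: order.strict_iff_order)
  ultimately show ?thesis unfolding lex_less_def by blast
qed

lemma eq_if_sum_eq_double_not_lex_less:
  fixes s s\<^sub>1 s\<^sub>2 :: "nat \<Rightarrow> nat"
  assumes sum: "\<And>n. s\<^sub>1 n + s\<^sub>2 n = 2 * s n"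
    and "\<not> lex_less s\<^sub>1 s" and "\<not> lex_less s\<^sub>2 s"
  shows "s\<^sub>1 = s"
proof (rule ccontr)
  assume "s\<^sub>1 \<noteq> s"
  then obtain N where eq\<^sub>1: "\<forall>n<N. s\<^sub>1 n = s n" and ne: "s\<^sub>1 N \<noteq> s N"
    by (rule first_difference)
  have eq\<^sub>2: "\<forall>n<N. s\<^sub>2 n = s n"
  proof (intro allI impI)
    fix n assume "n < N"
    with eq\<^sub>1 sum[of n] show "s\<^sub>2 n = s n" by simp
  qed
  from ne sum[of N] consider "s\<^sub>1 N < s N" | "s\<^sub>2 N < s N" by linarith
  then show False
  proof cases
    case 1 with eq\<^sub>1 assms(2) show False unfolding lex_less_def by blast
  next
    case 2 with eq\<^sub>2 assms(3) show False unfolding lex_less_def by blast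
  qed
qed

lemma matching_edgeE:
  assumes "matching E M" and "e \<in> M"
  obtains x y where "E x y" and "e = {x, y}"
proof -
  have "\<forall>e\<in>M. \<exists>x y. E x y \<and> e = {x, y}"
    using assms(1) unfolding matching_def by (rule conjunct1)
  with assms(2) that show ?thesis by blast
qed

lemma matching_disjoint:
  assumes "matching E M" and "e \<in> M" and "f \<in> M" and "e \<noteq> f"
  shows "e \<inter> f = {}"
  using assms unfolding matching_def by blast

lemma matching_partner_unique:
  assumes "matching E M" and "{a, b} \<in> M" and "{a, c} \<in> M"
  shows "b = c"
proof -
  have "{a, b} = {a, c}"
    using matching_disjoint[OF assms] by blast
  then show ?thesis by (metis doubleton_eq_iff)
qed

lemma matching_insert:
  assumes "matching E M" and "E a b" and "misses M a" and "misses M b"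
  shows "matching E (insert {a, b} M)"
  unfolding matching_def
proof (intro conjI ballI impI)
  fix e assume "e \<in> insert {a, b} M"
  then show "\<exists>x y. E x y \<and> e = {x, y}"
    using assms(2) matching_edgeE[OF assms(1)] by blast
next
  fix e f assume ef: "e \<in> insert {a, b} M" "f \<in> insert {a, b} M" "e \<noteq> f"
  have ab: "{a, b} \<inter> g = {}" if "g \<in> M" for g
    using assms(3,4) that unfolding misses_def by blast
  show "e \<inter> f = {}"
    using ef ab[of e] ab[of f] matching_disjoint[OF assms(1), of e f] by auto
qed

lemma misses_insert: "misses (insert {a, b} M) x \<longleftrightarrow> misses M x \<and> x \<noteq> a \<and> x \<noteq> b"
  unfolding misses_def by auto

lemma matching_less_iff_lex_less:
  "matching_less B M\<^sub>1 M\<^sub>2 \<longleftrightarrow> lex_less (miss_seq B M\<^sub>2) (miss_seq B M\<^sub>1)"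
  unfolding matching_less_def lex_less_def by (simp add: eq_commute)

lemma maximum_matching_iff:
  "maximum_matching E B M \<longleftrightarrow>
     matching E M \<and> (\<forall>M'. matching E M' \<longrightarrow> \<not> lex_less (miss_seq B M') (miss_seq B M))"
  unfolding maximum_matching_def matching_less_iff_lex_less by simp

lemma miss_seq_eq_if_maximum_matching:
  assumes "maximum_matching E B M" and "maximum_matching E B M'"
  shows "miss_seq B M = miss_seq B M'"
proof (rule ccontr)
  assume "miss_seq B M \<noteq> miss_seq B M'"
  then have "lex_less (miss_seq B M) (miss_seq B M') \<or> lex_less (miss_seq B M') (miss_seq B M)"
    by (rule lex_less_linear)
  with assms show False unfolding maximum_matching_iff by blast
qed

lemma maximum_matching_if_miss_seq_eq:
  assumes "maximum_matching E B M" and "matching E M'" and "miss_seq B M' = miss_seq B M"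
  shows "maximum_matching E B M'"
  using assms unfolding maximum_matching_iff by simp

lemma maximum_matching_covers_edge:
  assumes fin: "\<And>n. finite (B n)" and "a \<in> (\<Union>n. B n)"
    and "maximum_matching E B M" and "E a b"
  shows "\<not> (misses M a \<and> misses M b)"
proof
  assume missed: "misses M a \<and> misses M b"
  let ?M' = "insert {a, b} M"
  obtain n\<^sub>0 where "a \<in> B n\<^sub>0" using assms(2) by blast
  have "matching E M" using assms(3) unfolding maximum_matching_iff by simp
  then have "matching E ?M'" using assms(4) missed by (simp add: matching_insert)
  moreover have "lex_less (miss_seq B ?M') (miss_seq B M)"
  proof (rule lex_less_if_le)
    show "miss_seq B ?M' n \<le> miss_seq B M n" for n
      unfolding miss_seq_def misses_insert by (rule card_mono) (use fin in auto)
    have "miss_seq B ?M' n\<^sub>0 < miss_seq B M n\<^sub>0"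
      unfolding miss_seq_def misses_insert
      by (rule psubset_card_mono) (use fin \<open>a \<in> B n\<^sub>0\<close> missed in auto)
    then show "miss_seq B ?M' \<noteq> miss_seq B M" by auto
  qed
  ultimately show False using assms(3) unfolding maximum_matching_iff by simp
qed

lemma card_filter_add_eq:
  assumes "finite A"
    and "\<And>x. x \<in> A \<Longrightarrow> of_bool (P\<^sub>1 x) + of_bool (P\<^sub>2 x) = (of_bool (Q\<^sub>1 x) + of_bool (Q\<^sub>2 x) :: nat)"
  shows "card {x\<in>A. P\<^sub>1 x} + card {x\<in>A. P\<^sub>2 x} = card {x\<in>A. Q\<^sub>1 x} + card {x\<in>A. Q\<^sub>2 x}"
proof -
  have card_eq_sum: "card {x\<in>A. P x} = (\<Sum>x\<in>A. of_bool (P x))" for P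
    using assms(1) by (simp add: Int_def)
  show ?thesis
    unfolding card_eq_sum sum.distrib[symmetric] using assms(2) by (rule sum.cong[OF refl])
qed

definition switch_on :: "'a set \<Rightarrow> 'a set set \<Rightarrow> 'a set set \<Rightarrow> 'a set set" where
  "switch_on C M M' = {e \<in> M. e \<inter> C = {}} \<union> {e \<in> M'. e \<inter> C \<noteq> {}}"

definition edge_closed :: "'a set set \<Rightarrow> 'a set \<Rightarrow> bool" where
  "edge_closed F C \<longleftrightarrow> (\<forall>e\<in>F. e \<inter> C \<noteq> {} \<longrightarrow> e \<subseteq> C)"

lemma misses_switch_on:
  assumes closed: "edge_closed (M \<union> M') C"
  shows "misses (switch_on C M M') w \<longleftrightarrow> (if w \<in> C then misses M' w else misses M w)"
proof (cases "w \<in> C")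
  case True
  then have "e \<in> switch_on C M M' \<and> w \<in> e \<longleftrightarrow> e \<in> M' \<and> w \<in> e" for e
    unfolding switch_on_def by blast
  then have "misses (switch_on C M M') w \<longleftrightarrow> misses M' w" unfolding misses_def by blast
  with True show ?thesis by simp
next
  case False
  with closed have "e \<in> switch_on C M M' \<and> w \<in> e \<longleftrightarrow> e \<in> M \<and> w \<in> e" for e
    unfolding switch_on_def edge_closed_def by blast
  then have "misses (switch_on C M M') w \<longleftrightarrow> misses M w" unfolding misses_def by blast
  with False show ?thesis by simp
qed

lemma matching_switch_on:
  assumes "matching E M" and "matching E M'"
    and closed: "edge_closed (M \<union> M') C"
  shows "matching E (switch_on C M M')"
  unfolding matching_def
proof (intro conjI ballI impI)
  fix e assume "e \<in> switch_on C M M'"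
  then have "e \<in> M \<or> e \<in> M'" unfolding switch_on_def by blast
  then obtain x y where "E x y" and "e = {x, y}"
    using matching_edgeE[OF assms(1)] matching_edgeE[OF assms(2)] by metis
  then show "\<exists>x y. E x y \<and> e = {x, y}" by blast
next
  fix e f assume ef: "e \<in> switch_on C M M'" "f \<in> switch_on C M M'" "e \<noteq> f"
  then consider "e \<in> M" "f \<in> M" | "e \<in> M'" "f \<in> M'"
    | "e \<inter> C = {}" "f \<in> M'" "f \<inter> C \<noteq> {}" | "f \<inter> C = {}" "e \<in> M'" "e \<inter> C \<noteq> {}"
    unfolding switch_on_def by blast
  then show "e \<inter> f = {}"
  proof cases
    case 1 then show ?thesis using matching_disjoint[OF assms(1)] ef(3) by blast
  next
    case 2 then show ?thesis using matching_disjoint[OF assms(2)] ef(3) by blast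
  next
    case 3 then show ?thesis using closed unfolding edge_closed_def by blast
  next
    case 4 then show ?thesis using closed unfolding edge_closed_def by blast
  qed
qed

lemma miss_seq_switch_on_add:
  assumes "finite (B n)"
    and closed: "edge_closed (M \<union> M') C"
  shows "miss_seq B (switch_on C M M') n + miss_seq B (switch_on C M' M) n
    = miss_seq B M n + miss_seq B M' n"
proof -
  have closed': "edge_closed (M' \<union> M) C" using closed by (simp add: Un_commute)
  show ?thesis
    unfolding miss_seq_def
  proof (rule card_filter_add_eq[OF assms(1)])
    fix x
    show "of_bool (misses (switch_on C M M') x) + of_bool (misses (switch_on C M' M) x)
      = (of_bool (misses M x) + of_bool (misses M' x) :: nat)"
      unfolding misses_switch_on[OF closed] misses_switch_on[OF closed'] by simp
  qed
qed

lemma maximum_matching_switch_on: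
  assumes fin: "\<And>n. finite (B n)"
    and max: "maximum_matching E B M" and max': "maximum_matching E B M'"
    and closed: "edge_closed (M \<union> M') C"
  shows "maximum_matching E B (switch_on C M M')"
proof -
  have closed': "edge_closed (M' \<union> M) C" using closed by (simp add: Un_commute)
  have m: "matching E M" and m': "matching E M'"
    using max max' unfolding maximum_matching_iff by simp_all
  have m\<^sub>1: "matching E (switch_on C M M')" using matching_switch_on[OF m m' closed] .
  have m\<^sub>2: "matching E (switch_on C M' M)" using matching_switch_on[OF m' m closed'] .
  have "miss_seq B (switch_on C M M') n + miss_seq B (switch_on C M' M) n = 2 * miss_seq B M n" for n
    using miss_seq_switch_on_add[OF fin closed] miss_seq_eq_if_maximum_matching[OF max max'] by simp
  then have "miss_seq B (switch_on C M M') = miss_seq B M"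
    by (rule eq_if_sum_eq_double_not_lex_less) (use max m\<^sub>1 m\<^sub>2 in \<open>simp_all add: maximum_matching_iff\<close>)
  then show ?thesis by (rule maximum_matching_if_miss_seq_eq[OF max m\<^sub>1])
qed

definition partner :: "'a set set \<Rightarrow> 'a \<Rightarrow> 'a" where
  "partner M a = (SOME b. {a, b} \<in> M)"

lemma partner_eq:
  assumes "matching E M" and "{a, b} \<in> M"
  shows "partner M a = b"
proof -
  have "{a, partner M a} \<in> M" unfolding partner_def using assms(2) by (rule someI)
  with assms show ?thesis by (blast intro: matching_partner_unique)
qed

text \<open>As \<open>partner\<close> is arbitrary at an unmatched vertex, only the initial segment
  singled out by \<open>alt_walk_defined\<close> is meaningful.\<close>

primrec alt_walk :: "'a set set \<Rightarrow> 'a set set \<Rightarrow> 'a \<Rightarrow> nat \<Rightarrow> 'a" where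
  "alt_walk M M' x 0 = x"
| "alt_walk M M' x (Suc k) = partner (if even k then M else M') (alt_walk M M' x k)"

definition alt_walk_defined :: "'a set set \<Rightarrow> 'a set set \<Rightarrow> 'a \<Rightarrow> nat \<Rightarrow> bool" where
  "alt_walk_defined M M' x k \<longleftrightarrow>
     (\<forall>i<k. \<exists>b. {alt_walk M M' x i, b} \<in> (if even i then M else M'))"

definition alt_walk_vertices :: "'a set set \<Rightarrow> 'a set set \<Rightarrow> 'a \<Rightarrow> 'a set" where
  "alt_walk_vertices M M' x = {alt_walk M M' x k | k. alt_walk_defined M M' x k}"

lemma start_in_alt_walk_vertices: "x \<in> alt_walk_vertices M M' x"
  unfolding alt_walk_vertices_def alt_walk_defined_def by (intro CollectI exI[of _ 0]) simp

lemma alt_walk_defined_Suc: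
  "alt_walk_defined M M' x (Suc k) \<longleftrightarrow>
     alt_walk_defined M M' x k \<and> (\<exists>b. {alt_walk M M' x k, b} \<in> (if even k then M else M'))"
  unfolding alt_walk_defined_def All_less_Suc by blast

lemma alt_walk_defined_mono:
  "alt_walk_defined M M' x k \<Longrightarrow> j \<le> k \<Longrightarrow> alt_walk_defined M M' x j"
  unfolding alt_walk_defined_def by simp

lemma alt_walk_step:
  assumes "matching E M" and "matching E M'" and "alt_walk_defined M M' x (Suc k)"
  shows "{alt_walk M M' x k, alt_walk M M' x (Suc k)} \<in> (if even k then M else M')"
proof -
  obtain b where b: "{alt_walk M M' x k, b} \<in> (if even k then M else M')"
    using assms(3) unfolding alt_walk_defined_Suc by blast
  have "matching E (if even k then M else M')" using assms(1,2) by simp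
  from partner_eq[OF this b] b show ?thesis by simp
qed

lemma alt_walk_extend:
  assumes m: "matching E M" and m': "matching E M'" and "misses M' x"
    and defined: "alt_walk_defined M M' x k" and edge: "{alt_walk M M' x k, b} \<in> M \<union> M'"
  shows "\<exists>j. alt_walk_defined M M' x j \<and> alt_walk M M' x j = b"
proof (cases "{alt_walk M M' x k, b} \<in> (if even k then M else M')")
  case True
  have "matching E (if even k then M else M')" using m m' by simp
  from partner_eq[OF this True] have "alt_walk M M' x (Suc k) = b" by simp
  moreover have "alt_walk_defined M M' x (Suc k)"
    unfolding alt_walk_defined_Suc using defined True by blast
  ultimately show ?thesis by blast
next
  case False
  show ?thesis
  proof (cases k)
    case 0
    with False edge have "{x, b} \<in> M'" by simp
    with \<open>misses M' x\<close> show ?thesis unfolding misses_def by blast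
  next
    case (Suc j)
    \<comment> \<open>the edge is the one the walk arrived by, so \<open>b\<close> is the previous vertex\<close>
    let ?N = "if even j then M else M'"
    have "matching E ?N" using m m' by simp
    moreover have "{alt_walk M M' x k, alt_walk M M' x j} \<in> ?N"
      using alt_walk_step[OF m m', of x j] defined Suc by (simp add: insert_commute)
    moreover have "{alt_walk M M' x k, b} \<in> ?N" using edge False Suc by auto
    ultimately have "alt_walk M M' x j = b" by (rule matching_partner_unique)
    moreover have "alt_walk_defined M M' x j"
      using defined Suc alt_walk_defined_mono by (metis le_SucI order_refl)
    ultimately show ?thesis by blast
  qed
qed

lemma alt_walk_vertices_edge_closed:
  assumes m: "matching E M" and m': "matching E M'" and "misses M' x"
  shows "edge_closed (M \<union> M') (alt_walk_vertices M M' x)"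
  unfolding edge_closed_def
proof (intro ballI impI subsetI)
  fix e w assume e: "e \<in> M \<union> M'" and "e \<inter> alt_walk_vertices M M' x \<noteq> {}" and "w \<in> e"
  then obtain k where k: "alt_walk_defined M M' x k" "alt_walk M M' x k \<in> e"
    unfolding alt_walk_vertices_def by blast
  obtain p q where "e = {p, q}"
    using e matching_edgeE[OF m] matching_edgeE[OF m'] by (metis Un_iff)
  then obtain b where "e = {alt_walk M M' x k, b}" using k(2) by blast
  show "w \<in> alt_walk_vertices M M' x"
  proof (cases "w = alt_walk M M' x k")
    case True then show ?thesis using k(1) unfolding alt_walk_vertices_def by blast
  next
    case False
    with \<open>w \<in> e\<close> \<open>e = {alt_walk M M' x k, b}\<close> have "w = b" by blast
    with alt_walk_extend[OF m m' \<open>misses M' x\<close> k(1)] e \<open>e = {alt_walk M M' x k, b}\<close>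
    show ?thesis unfolding alt_walk_vertices_def by blast
  qed
qed

lemma alt_walk_stops_at_missed:
  assumes m: "matching E M" and m': "matching E M'"
    and defined: "alt_walk_defined M M' x k" and u: "alt_walk M M' x k = u"
    and "misses M u" and "u \<noteq> x"
  shows "\<not> alt_walk_defined M M' x (Suc k)"
proof
  assume defined_Suc: "alt_walk_defined M M' x (Suc k)"
  obtain j where j: "k = Suc j" using u \<open>u \<noteq> x\<close> by (cases k) auto
  \<comment> \<open>one of the two walk edges at \<open>u\<close> lies in \<open>M\<close>\<close>
  have "\<exists>b. {u, b} \<in> M"
  proof (cases "even j")
    case True
    with alt_walk_step[OF m m'] defined j u have "{alt_walk M M' x j, u} \<in> M" by fastforce
    then show ?thesis by (auto simp: insert_commute)
  next
    case False
    with j have "even k" by simp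
    with defined_Suc u show ?thesis unfolding alt_walk_defined_Suc by auto
  qed
  with \<open>misses M u\<close> show False unfolding misses_def by blast
qed

lemma alt_walk_defined_le:
  assumes "alt_walk_defined M M' x l" and "\<not> alt_walk_defined M M' x (Suc k)"
  shows "l \<le> k"
proof (rule ccontr)
  assume "\<not> l \<le> k"
  then have "Suc k \<le> l" by simp
  from alt_walk_defined_mono[OF assms(1) this] assms(2) show False by contradiction
qed

lemma alt_walk_vertices_missed_unique:
  assumes m: "matching E M" and m': "matching E M'"
    and "u \<in> alt_walk_vertices M M' x" and "v \<in> alt_walk_vertices M M' x"
    and "misses M u" and "misses M v" and "u \<noteq> x" and "v \<noteq> x"
  shows "u = v"
proof -
  obtain k where k: "alt_walk_defined M M' x k" "alt_walk M M' x k = u"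
    using assms(3) unfolding alt_walk_vertices_def by blast
  obtain l where l: "alt_walk_defined M M' x l" "alt_walk M M' x l = v"
    using assms(4) unfolding alt_walk_vertices_def by blast
  have "\<not> alt_walk_defined M M' x (Suc k)"
    using alt_walk_stops_at_missed[OF m m' k] assms(5,7) .
  with l(1) have "l \<le> k" by (rule alt_walk_defined_le)
  have "\<not> alt_walk_defined M M' x (Suc l)"
    using alt_walk_stops_at_missed[OF m m' l] assms(6,8) .
  with k(1) have "k \<le> l" by (rule alt_walk_defined_le)
  with \<open>l \<le> k\<close> have "k = l" by simp
  with k(2) l(2) show ?thesis by simp
qed

lemma is_path_ConsD:
  assumes "is_path V E (u # x # rest)"
  shows "E u x" and "is_path V E (x # rest)"
proof -
  have edges: "E ((u # x # rest) ! i) ((u # x # rest) ! Suc i)" if "Suc i < length (u # x # rest)" for i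
    using assms that unfolding is_path_def by blast
  show "E u x" using edges[of 0] by simp
  show "is_path V E (x # rest)"
    unfolding is_path_def
  proof (intro conjI allI impI)
    show "x # rest \<noteq> []" by simp
    show "distinct (x # rest)" and "set (x # rest) \<subseteq> V"
      using assms unfolding is_path_def by simp_all
    fix i assume "Suc i < length (x # rest)"
    then show "E ((x # rest) ! i) ((x # rest) ! Suc i)" using edges[of "Suc i"] by simp
  qed
qed

lemma maximum_matching_move_missed_vertex:
  assumes fin: "\<And>n. finite (B n)" and "u \<in> (\<Union>n. B n)"
    and max: "maximum_matching E B M" and "misses M u" and "misses M v" and "u \<noteq> v"
    and "E u x" and "u \<noteq> x" and "x \<noteq> v" and "\<not> critical E B x"
  shows "\<exists>M\<^sub>1. maximum_matching E B M\<^sub>1 \<and> misses M\<^sub>1 x \<and> misses M\<^sub>1 v"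
proof -
  obtain M' where max': "maximum_matching E B M'" and "misses M' x"
    using \<open>\<not> critical E B x\<close> unfolding critical_def by blast
  have m: "matching E M" and m': "matching E M'"
    using max max' unfolding maximum_matching_iff by simp_all
  define C where "C = alt_walk_vertices M M' x"
  have closed: "edge_closed (M \<union> M') C"
    unfolding C_def using alt_walk_vertices_edge_closed[OF m m' \<open>misses M' x\<close>] .
  define M\<^sub>1 where "M\<^sub>1 = switch_on C M M'"
  have max\<^sub>1: "maximum_matching E B M\<^sub>1"
    unfolding M\<^sub>1_def using maximum_matching_switch_on[OF fin max max' closed] .
  have misses\<^sub>1: "misses M\<^sub>1 w \<longleftrightarrow> (if w \<in> C then misses M' w else misses M w)" for w
    unfolding M\<^sub>1_def using misses_switch_on[OF closed] .
  have "x \<in> C" unfolding C_def by (rule start_in_alt_walk_vertices)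
  with \<open>misses M' x\<close> have "misses M\<^sub>1 x" by (simp add: misses\<^sub>1)
  have "u \<in> C"
  proof (rule ccontr)
    assume "u \<notin> C"
    with \<open>misses M u\<close> have "misses M\<^sub>1 u" by (simp add: misses\<^sub>1)
    with \<open>misses M\<^sub>1 x\<close> maximum_matching_covers_edge[OF fin \<open>u \<in> (\<Union>n. B n)\<close> max\<^sub>1 \<open>E u x\<close>]
    show False by blast
  qed
  \<comment> \<open>\<open>u\<close> is the far end of the walk, and there is only one\<close>
  have "v \<notin> C"
    using alt_walk_vertices_missed_unique[OF m m', of u x v] \<open>u \<in> C\<close> assms(4-6,8,9)
    unfolding C_def by blast
  with \<open>misses M v\<close> have "misses M\<^sub>1 v" by (simp add: misses\<^sub>1)
  with max\<^sub>1 \<open>misses M\<^sub>1 x\<close> show ?thesis by blast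
qed

lemma maximum_matching_not_misses_path_ends:
  assumes ex: "exhaustion V E B"
  shows "is_path V E P \<Longrightarrow> hd P = u \<Longrightarrow> last P = v \<Longrightarrow> u \<noteq> v \<Longrightarrow>
    \<forall>y\<in>set P - {u, v}. \<not> critical E B y \<Longrightarrow> maximum_matching E B M \<Longrightarrow>
    \<not> (misses M u \<and> misses M v)"
proof (induction P arbitrary: u M)
  case Nil
  then show ?case unfolding is_path_def by simp
next
  case (Cons u' rest)
  have fin: "finite (B n)" for n using ex unfolding exhaustion_def by simp
  have cover: "(\<Union>n. B n) = V" using ex unfolding exhaustion_def by simp
  from Cons.prems(2-4) obtain x rest' where rest: "rest = x # rest'" and "u' = u"
    by (cases rest) auto
  with Cons.prems(1) have path: "is_path V E (u # x # rest')" by simp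
  then have "E u x" and path': "is_path V E (x # rest')" by (rule is_path_ConsD)+
  from path have "u \<in> (\<Union>n. B n)" and "u \<noteq> x" and "u \<notin> set rest'"
    unfolding is_path_def cover by auto
  show ?case
  proof (cases "x = v")
    case True
    with maximum_matching_covers_edge[OF fin \<open>u \<in> (\<Union>n. B n)\<close> Cons.prems(6) \<open>E u x\<close>]
    show ?thesis by simp
  next
    case False
    with Cons.prems(5) rest \<open>u' = u\<close> \<open>u \<noteq> x\<close> have "\<not> critical E B x" by simp
    show ?thesis
    proof
      assume "misses M u \<and> misses M v"
      with maximum_matching_move_missed_vertex[OF fin \<open>u \<in> (\<Union>n. B n)\<close> Cons.prems(6)]
        Cons.prems(4) \<open>E u x\<close> \<open>u \<noteq> x\<close> False \<open>\<not> critical E B x\<close>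
      obtain M\<^sub>1 where "maximum_matching E B M\<^sub>1" and "misses M\<^sub>1 x \<and> misses M\<^sub>1 v" by blast
      moreover have "\<forall>y\<in>set rest - {x, v}. \<not> critical E B y"
        using Cons.prems(5) \<open>u \<notin> set rest'\<close> rest \<open>u' = u\<close> by auto
      ultimately show False
        using Cons.IH[of x M\<^sub>1] path' rest Cons.prems(3) \<open>u' = u\<close> False by simp
    qed
  qed
qed

theorem lemmaA4:
  fixes V :: "'a set" and E :: "'a \<Rightarrow> 'a \<Rightarrow> bool" and B :: "nat \<Rightarrow> 'a set"
    and u v :: 'a and P :: "'a list"
  assumes "graph V E" and "connected_graph V E" and "countable V"
    and "exhaustion V E B"
    and "u \<in> V" and "v \<in> V" and "u \<noteq> v"
    and "is_path V E P" and "hd P = u" and "last P = v"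
    and "\<forall>x\<in>set P - {u, v}. \<not> critical E B x"
  shows "\<not> (\<exists>M. maximum_matching E B M \<and> misses M u \<and> misses M v)"
  using maximum_matching_not_misses_path_ends[OF assms(4,8-10,7,11)] by blast

end
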